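(* Let $T$ be a tree of height $\omega$ and size $\aleph_1$, let $\mathcal{B}$ be a collection of infinite (cofinal) branches through $T$, and let $\theta$ be a sufficiently large regular cardinal. Then the following are equivalent: (1) $\mathcal{B}$ is stationary over $T$. (2) Either (a) there is a Cantor-subtree $S\subseteq T$, or (b) for every bijection $e:\omega_1\to T$, identifying nodes with countable ordinals via $e$, the set $E_\mathcal{B}=\{\alpha<\omega_1:\sup(b)=\alpha\text{ for some }b\in\mathcal{B}\}$ is stationary in $\omega_1$ (where $\sup(b)=\sup\{e^{-1}(x):x\in b\}$). (3) The set $\mathcal{N}(T,\mathcal{B})$ is stationary in $[H_\theta]^{\aleph_0}$.
   Context: A collection $\mathcal{B}$ of cofinal branches through a tree $T$ is non-stationary over $T$ if there is a function $f:\mathcal{B}\to T$ with $f(b)\in b$ for all $b\in\mathcal{B}$ such that for distinct $b,b'\in\mathcal{B}$, $f(b)\notin b'$ or $f(b')\notin b$ (i.e. $f(b)$ or $f(b')$ is strictly above $b\cap b'$); otherwise $\mathcal{B}$ is stationary over $T$. For $S\subseteq T$ let $\overline{S}=\{b\in\mathcal{B}: b\cap S\text{ is infinite}\}$; $S$ is a Cantor-subtree of $T$ if $S$ is countable and $\overline{S}$ is uncountable. $\mathcal{N}(T,\mathcal{B})$ is the set of $N\in[H_\theta]^{\aleph_0}$ such that there is $b\in\mathcal{B}$ with $b\subseteq N$ but $b\notin N$. *)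

theory Defs
  imports Main "HOL-Library.Countable_Set"
begin

definition preds :: "'a set \<Rightarrow> ('a \<Rightarrow> 'a \<Rightarrow> bool) \<Rightarrow> 'a \<Rightarrow> 'a set" where
  "preds T lt t = {s \<in> T. lt s t}"

definition is_tree :: "'a set \<Rightarrow> ('a \<Rightarrow> 'a \<Rightarrow> bool) \<Rightarrow> bool" where
  "is_tree T lt \<longleftrightarrow>
     (\<forall>t\<in>T. \<not> lt t t) \<and>
     (\<forall>r\<in>T. \<forall>s\<in>T. \<forall>t\<in>T. lt r s \<longrightarrow> lt s t \<longrightarrow> lt r t) \<and>
     (\<forall>t\<in>T. \<forall>r\<in>preds T lt t. \<forall>s\<in>preds T lt t. lt r s \<or> r = s \<or> lt s r)"

definition height_omega :: "'a set \<Rightarrow> ('a \<Rightarrow> 'a \<Rightarrow> bool) \<Rightarrow> bool" where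
  "height_omega T lt \<longleftrightarrow>
     (\<forall>t\<in>T. finite (preds T lt t)) \<and> (\<forall>n::nat. \<exists>t\<in>T. card (preds T lt t) = n)"

definition lin_chain :: "'a set \<Rightarrow> ('a \<Rightarrow> 'a \<Rightarrow> bool) \<Rightarrow> 'a set \<Rightarrow> bool" where
  "lin_chain T lt c \<longleftrightarrow> c \<subseteq> T \<and> (\<forall>r\<in>c. \<forall>s\<in>c. lt r s \<or> r = s \<or> lt s r)"

definition cofinal_branch :: "'a set \<Rightarrow> ('a \<Rightarrow> 'a \<Rightarrow> bool) \<Rightarrow> 'a set \<Rightarrow> bool" where
  "cofinal_branch T lt b \<longleftrightarrow>
     lin_chain T lt b \<and> (\<forall>c. lin_chain T lt c \<longrightarrow> b \<subseteq> c \<longrightarrow> c = b) \<and>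
     (\<forall>n::nat. \<exists>t\<in>b. card (preds T lt t) = n)"

definition nonstationary_over :: "'a set \<Rightarrow> ('a \<Rightarrow> 'a \<Rightarrow> bool) \<Rightarrow> 'a set set \<Rightarrow> bool" where
  "nonstationary_over T lt B \<longleftrightarrow>
     (\<exists>f. (\<forall>b\<in>B. f b \<in> b) \<and>
          (\<forall>b\<in>B. \<forall>b'\<in>B. b \<noteq> b' \<longrightarrow> f b \<notin> b' \<or> f b' \<notin> b))"

definition stationary_over :: "'a set \<Rightarrow> ('a \<Rightarrow> 'a \<Rightarrow> bool) \<Rightarrow> 'a set set \<Rightarrow> bool" where
  "stationary_over T lt B \<longleftrightarrow> \<not> nonstationary_over T lt B"

definition closure_B :: "'a set set \<Rightarrow> 'a set \<Rightarrow> 'a set set" where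
  "closure_B B S = {b \<in> B. infinite (b \<inter> S)}"

definition cantor_subtree :: "'a set \<Rightarrow> 'a set set \<Rightarrow> 'a set \<Rightarrow> bool" where
  "cantor_subtree T B S \<longleftrightarrow> S \<subseteq> T \<and> countable S \<and> uncountable (closure_B B S)"

text \<open>omega_1 is represented by the well-order cardSuc natLeq (successor cardinal of
aleph_0); its field is the set of countable ordinals, and (a,b) in w1 means a <= b.\<close>

abbreviation w1 :: "nat set rel" where
  "w1 \<equiv> cardSuc natLeq"

definition w1_sup :: "nat set set \<Rightarrow> nat set \<Rightarrow> bool" where
  "w1_sup A a \<longleftrightarrow> a \<in> Field w1 \<and> (\<forall>x\<in>A. (x, a) \<in> w1) \<and>
     (\<forall>c\<in>Field w1. (\<forall>x\<in>A. (x, c) \<in> w1) \<longrightarrow> (a, c) \<in> w1)"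

definition w1_club :: "nat set set \<Rightarrow> bool" where
  "w1_club C \<longleftrightarrow> C \<subseteq> Field w1 \<and>
     (\<forall>a\<in>Field w1. \<exists>c\<in>C. (a, c) \<in> w1 \<and> a \<noteq> c) \<and>
     (\<forall>A. A \<subseteq> C \<longrightarrow> A \<noteq> {} \<longrightarrow> (\<forall>a. w1_sup A a \<longrightarrow> a \<in> C))"

definition w1_stationary :: "nat set set \<Rightarrow> bool" where
  "w1_stationary E \<longleftrightarrow> E \<subseteq> Field w1 \<and> (\<forall>C. w1_club C \<longrightarrow> C \<inter> E \<noteq> {})"

definition E_set :: "(nat set \<Rightarrow> 'a) \<Rightarrow> 'a set set \<Rightarrow> nat set set" where
  "E_set e B = {a \<in> Field w1. \<exists>b\<in>B. w1_sup (inv_into (Field w1) e ` b) a}"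

definition ctbl_subsets :: "'h set \<Rightarrow> 'h set set" where
  "ctbl_subsets X = {N. N \<subseteq> X \<and> countable N \<and> infinite N}"

definition club_ctbl :: "'h set \<Rightarrow> 'h set set \<Rightarrow> bool" where
  "club_ctbl X C \<longleftrightarrow> C \<subseteq> ctbl_subsets X \<and>
     (\<forall>x\<in>ctbl_subsets X. \<exists>y\<in>C. x \<subseteq> y) \<and>
     (\<forall>ch. ch \<subseteq> C \<longrightarrow> ch \<noteq> {} \<longrightarrow> countable ch \<longrightarrow>
        (\<forall>u\<in>ch. \<forall>v\<in>ch. u \<subseteq> v \<or> v \<subseteq> u) \<longrightarrow> \<Union>ch \<in> C)"

definition stationary_ctbl :: "'h set \<Rightarrow> 'h set set \<Rightarrow> bool" where
  "stationary_ctbl X S \<longleftrightarrow> S \<subseteq> ctbl_subsets X \<and> (\<forall>C. club_ctbl X C \<longrightarrow> C \<inter> S \<noteq> {})"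

text \<open>N(T,B): nodes are coded into X by node, branches by code.\<close>
definition N_set :: "'h set \<Rightarrow> ('a \<Rightarrow> 'h) \<Rightarrow> ('a set \<Rightarrow> 'h) \<Rightarrow> 'a set set \<Rightarrow> 'h set set" where
  "N_set X node code B =
     {N \<in> ctbl_subsets X. \<exists>b\<in>B. node ` b \<subseteq> N \<and> code b \<notin> N}"

end

theory Submission
  imports Defs "HOL-Library.Countable_Set_Type"
begin

unbundle cardinal_syntax

abbreviation w1_less :: "nat set \<Rightarrow> nat set \<Rightarrow> bool" where
  "w1_less a b \<equiv> (a, b) \<in> w1 \<and> a \<noteq> b"

lemma w1_Card_order: "Card_order w1"
  by (simp add: cardSuc_Card_order natLeq_Card_order)

lemma w1_wo_rel: "wo_rel w1"
  using w1_Card_order card_order_on_well_order_on wo_rel_def by blast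

lemma w1_total: "a \<in> Field w1 \<Longrightarrow> b \<in> Field w1 \<Longrightarrow> (a, b) \<in> w1 \<or> (b, a) \<in> w1"
  using wo_rel.TOTALS[OF w1_wo_rel] by blast

lemma w1_refl: "a \<in> Field w1 \<Longrightarrow> (a, a) \<in> w1"
  using wo_rel.REFL[OF w1_wo_rel] by (simp add: refl_on_def)

lemma w1_trans: "(a, b) \<in> w1 \<Longrightarrow> (b, c) \<in> w1 \<Longrightarrow> (a, c) \<in> w1"
  using wo_rel.TRANS[OF w1_wo_rel] by (meson transE)

lemma w1_antisym: "(a, b) \<in> w1 \<Longrightarrow> (b, a) \<in> w1 \<Longrightarrow> a = b"
  using wo_rel.ANTISYM[OF w1_wo_rel] by (meson antisymD)

lemma w1_Field: "(a, b) \<in> w1 \<Longrightarrow> a \<in> Field w1 \<and> b \<in> Field w1"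
  by (simp add: FieldI1 FieldI2)

lemma w1_not_le_iff_less: "a \<in> Field w1 \<Longrightarrow> b \<in> Field w1 \<Longrightarrow> (a, b) \<notin> w1 \<longleftrightarrow> w1_less b a"
  using w1_total w1_antisym w1_refl by blast

lemma w1_less_le_trans: "w1_less a b \<Longrightarrow> (b, c) \<in> w1 \<Longrightarrow> w1_less a c"
  by (metis w1_trans w1_antisym)

lemma countable_w1_less: "a \<in> Field w1 \<Longrightarrow> countable {b. w1_less b a}"
proof -
  assume a: "a \<in> Field w1"
  have "|underS w1 a| <o w1" using card_of_underS[OF w1_Card_order a] .
  then have "|underS w1 a| \<le>o natLeq"
    using cardSuc_ordLeq_ordLess[OF natLeq_Card_order card_of_Card_order] by blast
  then have "countable (underS w1 a)" using countable_card_le_natLeq by blast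
  moreover have "underS w1 a = {b. w1_less b a}" unfolding underS_def by blast
  ultimately show ?thesis by simp
qed

lemma uncountable_Field_w1: "uncountable (Field w1)"
proof
  assume "countable (Field w1)"
  then have "|Field w1| \<le>o natLeq" using countable_card_le_natLeq by blast
  moreover have "|Field w1| =o w1" using card_of_Field_ordIso[OF w1_Card_order] .
  ultimately have "w1 \<le>o natLeq" using ordIso_symmetric ordIso_ordLeq_trans by blast
  then show False
    using cardSuc_greater[OF natLeq_Card_order] not_ordLess_ordLeq by blast
qed

text \<open>A countable set of countable ordinals is bounded: the ordinals at most one of its
  elements form a countable set, so some countable ordinal lies outside it.\<close>
lemma w1_countable_bounded:
  assumes "countable A" "A \<subseteq> Field w1"
  obtains u where "u \<in> Field w1" "\<forall>x\<in>A. w1_less x u"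
proof -
  have "countable (\<Union>x\<in>A. insert x {b. w1_less b x})"
    using assms by (auto intro!: countable_w1_less)
  then have "\<not> Field w1 \<subseteq> (\<Union>x\<in>A. insert x {b. w1_less b x})"
    using uncountable_Field_w1 countable_subset by blast
  then obtain u where u: "u \<in> Field w1" "u \<notin> (\<Union>x\<in>A. insert x {b. w1_less b x})"
    by blast
  have "w1_less x u" if x: "x \<in> A" for x
  proof -
    have "x \<in> Field w1" "u \<noteq> x" "\<not> w1_less u x" using x assms(2) u(2) by auto
    then show ?thesis using w1_total[OF _ u(1)] by blast
  qed
  with u(1) show thesis using that by blast
qed

lemma w1_least:
  assumes "P a" "a \<in> Field w1"
  shows "\<exists>c\<in>Field w1. P c \<and> (\<forall>d\<in>Field w1. P d \<longrightarrow> (c, d) \<in> w1)"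
proof -
  obtain c where c: "c \<in> {x\<in>Field w1. P x}"
    and min: "\<And>y. (y, c) \<in> w1 - Id \<Longrightarrow> y \<notin> {x\<in>Field w1. P x}"
    using wfE_min[OF wo_rel.WF[OF w1_wo_rel], of a "{x\<in>Field w1. P x}"] assms by auto
  have "(c, d) \<in> w1" if "d \<in> Field w1" "P d" for d
    using min[of d] that w1_total[of c d] c by auto
  then show ?thesis using c by blast
qed

lemma w1_sup_exists:
  assumes "countable A" "A \<subseteq> Field w1"
  obtains s where "w1_sup A s"
proof -
  obtain u where "u \<in> Field w1" "\<forall>x\<in>A. w1_less x u"
    using w1_countable_bounded[OF assms] by blast
  then obtain s where "s \<in> Field w1" "\<forall>x\<in>A. (x, s) \<in> w1"
    "\<forall>c\<in>Field w1. (\<forall>x\<in>A. (x, c) \<in> w1) \<longrightarrow> (s, c) \<in> w1"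
    using w1_least[of "\<lambda>c. \<forall>x\<in>A. (x, c) \<in> w1" u] by auto
  then show thesis using that unfolding w1_sup_def by blast
qed

lemma w1_sup_upper: "w1_sup A s \<Longrightarrow> x \<in> A \<Longrightarrow> (x, s) \<in> w1"
  unfolding w1_sup_def by blast

lemma w1_sup_least: "w1_sup A s \<Longrightarrow> c \<in> Field w1 \<Longrightarrow> \<forall>x\<in>A. (x, c) \<in> w1 \<Longrightarrow> (s, c) \<in> w1"
  unfolding w1_sup_def by blast

lemma w1_sup_Field: "w1_sup A s \<Longrightarrow> s \<in> Field w1"
  unfolding w1_sup_def by blast

lemma w1_less_sup_obtains:
  assumes s: "w1_sup A s" and b: "w1_less b s"
  obtains x where "x \<in> A" "w1_less b x"
proof -
  have "\<exists>x\<in>A. w1_less b x"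
  proof (rule ccontr)
    assume "\<not> (\<exists>x\<in>A. w1_less b x)"
    have "(x, b) \<in> w1" if x: "x \<in> A" for x
    proof -
      have "x \<in> Field w1" "b \<in> Field w1" using w1_sup_upper[OF s x] b w1_Field by blast+
      then show ?thesis using w1_total w1_refl x \<open>\<not> (\<exists>x\<in>A. w1_less b x)\<close> by metis
    qed
    then have "\<forall>x\<in>A. (x, b) \<in> w1" by blast
    then have "(s, b) \<in> w1" using w1_sup_least[OF s] w1_Field b by blast
    then show False using b w1_antisym by blast
  qed
  then show thesis using that by blast
qed

lemma w1_sup_cofinal:
  assumes s: "w1_sup A s"
    and below: "\<forall>y\<in>A'. \<exists>x\<in>A. (y, x) \<in> w1"
    and above: "\<forall>x\<in>A. \<exists>y\<in>A'. (x, y) \<in> w1"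
  shows "w1_sup A' s"
  unfolding w1_sup_def
proof (intro conjI ballI impI w1_sup_Field[OF s])
  fix y assume "y \<in> A'"
  then show "(y, s) \<in> w1" using below w1_sup_upper[OF s] w1_trans by blast
next
  fix c assume c: "c \<in> Field w1" "\<forall>y\<in>A'. (y, c) \<in> w1"
  have "\<forall>x\<in>A. (x, c) \<in> w1" using above c(2) w1_trans by blast
  then show "(s, c) \<in> w1" using w1_sup_least[OF s c(1)] by blast
qed

lemma w1_club_subset: "w1_club C \<Longrightarrow> C \<subseteq> Field w1"
  unfolding w1_club_def by blast

lemma w1_club_unbounded: "w1_club C \<Longrightarrow> a \<in> Field w1 \<Longrightarrow> \<exists>c\<in>C. w1_less a c"
  unfolding w1_club_def by blast

lemma w1_club_closed: "w1_club C \<Longrightarrow> A \<subseteq> C \<Longrightarrow> A \<noteq> {} \<Longrightarrow> w1_sup A a \<Longrightarrow> a \<in> C"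
  unfolding w1_club_def by blast

lemma w1_iterates_sup:
  assumes g: "\<forall>x\<in>Field w1. g x \<in> Field w1 \<and> w1_less x (g x)" and \<alpha>: "\<alpha> \<in> Field w1"
  obtains s where "w1_sup (range (\<lambda>n. (g ^^ n) \<alpha>)) s" "w1_less \<alpha> s"
proof -
  have Field: "(g ^^ n) \<alpha> \<in> Field w1" for n
    by (induction n) (use g \<alpha> in auto)
  then have "range (\<lambda>n. (g ^^ n) \<alpha>) \<subseteq> Field w1" by blast
  then obtain s where s: "w1_sup (range (\<lambda>n. (g ^^ n) \<alpha>)) s"
    using w1_sup_exists[of "range (\<lambda>n. (g ^^ n) \<alpha>)"] by auto
  have "w1_less \<alpha> ((g ^^ 1) \<alpha>)" using g \<alpha> by simp
  then have "w1_less \<alpha> s" using w1_sup_upper[OF s] w1_less_le_trans by blast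
  with s show thesis using that by blast
qed

lemma w1_club_closure_points:
  assumes h: "\<forall>\<beta>\<in>Field w1. h \<beta> \<in> Field w1"
  shows "w1_club {\<gamma>\<in>Field w1. \<forall>\<beta>. w1_less \<beta> \<gamma> \<longrightarrow> w1_less (h \<beta>) \<gamma>}" (is "w1_club ?C")
  unfolding w1_club_def
proof (intro conjI allI impI ballI)
  show "?C \<subseteq> Field w1" by blast
next
  fix \<alpha> assume \<alpha>: "\<alpha> \<in> Field w1"
  have "\<forall>x\<in>Field w1. \<exists>u. u \<in> Field w1 \<and> w1_less x u \<and> (\<forall>\<beta>. w1_less \<beta> x \<longrightarrow> w1_less (h \<beta>) u)"
  proof
    fix x assume x: "x \<in> Field w1"
    have "countable (insert x (h ` {\<beta>. w1_less \<beta> x}))"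
      using countable_w1_less[OF x] by simp
    moreover have "insert x (h ` {\<beta>. w1_less \<beta> x}) \<subseteq> Field w1"
      using x h w1_Field by blast
    ultimately obtain u where "u \<in> Field w1" "\<forall>y\<in>insert x (h ` {\<beta>. w1_less \<beta> x}). w1_less y u"
      by (rule w1_countable_bounded)
    then show "\<exists>u. u \<in> Field w1 \<and> w1_less x u \<and> (\<forall>\<beta>. w1_less \<beta> x \<longrightarrow> w1_less (h \<beta>) u)"
      by blast
  qed
  from bchoice[OF this] obtain g where g: "\<forall>x\<in>Field w1. g x \<in> Field w1 \<and> w1_less x (g x) \<and>
      (\<forall>\<beta>. w1_less \<beta> x \<longrightarrow> w1_less (h \<beta>) (g x))"
    by blast
  then have "\<forall>x\<in>Field w1. g x \<in> Field w1 \<and> w1_less x (g x)" by blast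
  then obtain s where s: "w1_sup (range (\<lambda>n. (g ^^ n) \<alpha>)) s" "w1_less \<alpha> s"
    using w1_iterates_sup[OF _ \<alpha>] by blast
  have below_s: "((g ^^ m) \<alpha>, s) \<in> w1" for m
    by (rule w1_sup_upper[OF s(1)]) (rule rangeI)
  have "w1_less (h \<beta>) s" if \<beta>: "w1_less \<beta> s" for \<beta>
  proof -
    obtain x where x: "x \<in> range (\<lambda>n. (g ^^ n) \<alpha>)" "w1_less \<beta> x"
      using w1_less_sup_obtains[OF s(1) \<beta>] by blast
    then obtain n where n: "x = (g ^^ n) \<alpha>" by blast
    have "x \<in> Field w1" using x(2) w1_Field by blast
    then have "w1_less (h \<beta>) (g x)" using g x(2) by blast
    moreover have "(g x, s) \<in> w1" using below_s[of "Suc n"] n by simp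
    ultimately show ?thesis by (rule w1_less_le_trans)
  qed
  then have "s \<in> ?C" using w1_sup_Field[OF s(1)] by blast
  then show "\<exists>c\<in>?C. (\<alpha>, c) \<in> w1 \<and> \<alpha> \<noteq> c" using s(2) by blast
next
  fix A a assume A: "A \<subseteq> ?C" "A \<noteq> {}" and a: "w1_sup A a"
  have "w1_less (h \<beta>) a" if \<beta>: "w1_less \<beta> a" for \<beta>
  proof -
    obtain d where "d \<in> A" "w1_less \<beta> d" using w1_less_sup_obtains[OF a \<beta>] by blast
    then have "w1_less (h \<beta>) d" "(d, a) \<in> w1" using A w1_sup_upper[OF a] by auto
    then show ?thesis by (rule w1_less_le_trans)
  qed
  then show "a \<in> ?C" using w1_sup_Field[OF a] by blast
qed

lemma w1_club_Int:
  assumes C: "w1_club C" and D: "w1_club D"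
  shows "w1_club (C \<inter> D)"
  unfolding w1_club_def
proof (intro conjI allI impI ballI)
  show "C \<inter> D \<subseteq> Field w1" using w1_club_subset[OF C] by blast
next
  fix A a assume "A \<subseteq> C \<inter> D" "A \<noteq> {}" "w1_sup A a"
  then show "a \<in> C \<inter> D" using w1_club_closed[OF C] w1_club_closed[OF D] by blast
next
  fix \<alpha> assume \<alpha>: "\<alpha> \<in> Field w1"
  have "\<forall>x\<in>Field w1. \<exists>c. c \<in> C \<and> w1_less x c" using w1_club_unbounded[OF C] by blast
  from bchoice[OF this] obtain nC where nC: "\<forall>x\<in>Field w1. nC x \<in> C \<and> w1_less x (nC x)"
    by blast
  have "\<forall>x\<in>Field w1. \<exists>c. c \<in> D \<and> w1_less x c" using w1_club_unbounded[OF D] by blast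
  from bchoice[OF this] obtain nD where nD: "\<forall>x\<in>Field w1. nD x \<in> D \<and> w1_less x (nD x)"
    by blast
  have CF: "C \<subseteq> Field w1" and DF: "D \<subseteq> Field w1" using w1_club_subset C D by auto
  define g where "g x = nC (nD x)" for x
  have g: "\<forall>x\<in>Field w1. g x \<in> Field w1 \<and> w1_less x (g x)"
  proof
    fix x assume "x \<in> Field w1"
    then have "nD x \<in> Field w1" "w1_less x (nD x)" using nD DF by auto
    moreover from this have "nC (nD x) \<in> Field w1" "w1_less (nD x) (nC (nD x))" using nC CF by auto
    ultimately show "g x \<in> Field w1 \<and> w1_less x (g x)"
      unfolding g_def using w1_less_le_trans by blast
  qed
  define a where "a n = (g ^^ n) \<alpha>" for n
  obtain s where s: "w1_sup (range a) s" "w1_less \<alpha> s"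
    using w1_iterates_sup[OF g \<alpha>] unfolding a_def by blast
  have aF: "a n \<in> Field w1" for n using w1_sup_upper[OF s(1)] w1_Field by blast
  have a_Suc: "a (Suc n) = nC (nD (a n))" for n by (simp add: a_def g_def)
  have nD_a: "nD (a n) \<in> D" "w1_less (a n) (nD (a n))" for n using nD aF by auto
  have a_Suc_C: "a (Suc n) \<in> C" "w1_less (nD (a n)) (a (Suc n))" for n
  proof -
    have "nD (a n) \<in> Field w1" using nD_a(1) DF by blast
    then show "a (Suc n) \<in> C" "w1_less (nD (a n)) (a (Suc n))" using nC a_Suc by auto
  qed
  have a_mono: "(a n, a (Suc n)) \<in> w1" for n using nD_a(2) a_Suc_C(2) w1_trans by blast
  have "w1_sup (range (\<lambda>n. a (Suc n))) s"
    by (rule w1_sup_cofinal[OF s(1)]) (use w1_refl[OF aF] a_mono in blast)+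
  moreover have "range (\<lambda>n. a (Suc n)) \<subseteq> C" using a_Suc_C(1) by blast
  ultimately have sC: "s \<in> C" using w1_club_closed[OF C] by simp
  have "w1_sup (range (\<lambda>n. nD (a n))) s"
    by (rule w1_sup_cofinal[OF s(1)]) (use nD_a(2) a_Suc_C(2) in blast)+
  moreover have "range (\<lambda>n. nD (a n)) \<subseteq> D" using nD_a(1) by blast
  ultimately have "s \<in> D" using w1_club_closed[OF D] by simp
  with sC s(2) show "\<exists>c\<in>C \<inter> D. (\<alpha>, c) \<in> w1 \<and> \<alpha> \<noteq> c" by blast
qed

lemma club_ctbl_subset: "club_ctbl X C \<Longrightarrow> C \<subseteq> ctbl_subsets X"
  unfolding club_ctbl_def by blast

lemma club_ctbl_unbounded: "club_ctbl X C \<Longrightarrow> Y \<in> ctbl_subsets X \<Longrightarrow> \<exists>M\<in>C. Y \<subseteq> M"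
  unfolding club_ctbl_def by blast

lemma club_ctbl_Union:
  "club_ctbl X C \<Longrightarrow> ch \<subseteq> C \<Longrightarrow> ch \<noteq> {} \<Longrightarrow> countable ch \<Longrightarrow>
     \<forall>u\<in>ch. \<forall>v\<in>ch. u \<subseteq> v \<or> v \<subseteq> u \<Longrightarrow> \<Union>ch \<in> C"
  unfolding club_ctbl_def by blast

lemma Union_in_ctbl_subsets:
  assumes "ch \<subseteq> ctbl_subsets X" "ch \<noteq> {}" "countable ch"
  shows "\<Union>ch \<in> ctbl_subsets X"
proof -
  have "countable (\<Union>ch)"
    using countable_UN[of ch "\<lambda>u. u"] assms(1,3) unfolding ctbl_subsets_def by auto
  moreover obtain u where "u \<in> ch" using assms(2) by blast
  then have "infinite (\<Union>ch)"
    using assms(1) finite_subset[of u "\<Union>ch"] unfolding ctbl_subsets_def by blast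
  ultimately show ?thesis using assms(1) unfolding ctbl_subsets_def by blast
qed

lemma club_ctbl_ctbl_subsets: "club_ctbl X (ctbl_subsets X)"
  unfolding club_ctbl_def using Union_in_ctbl_subsets by blast

lemma Union_increasing_in_club_ctbl:
  assumes C: "club_ctbl X C" and M: "\<And>n. M n \<in> C" and inc: "\<And>n. M n \<subseteq> M (Suc n)"
  shows "(\<Union>n. M n) \<in> C"
proof (rule club_ctbl_Union[OF C])
  have "M m \<subseteq> M n \<or> M n \<subseteq> M m" for m n
    using lift_Suc_mono_le[of M, OF inc] by (metis nle_le)
  then show "\<forall>u\<in>range M. \<forall>v\<in>range M. u \<subseteq> v \<or> v \<subseteq> u" by blast
qed (use M in auto)

text \<open>The countable sets in a club that are closed under a countable-valued map form a club:
  close off under the map and reenter the club, \<open>\<omega>\<close> times.\<close>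
lemma club_ctbl_closure_points:
  assumes C: "club_ctbl X C" and \<phi>: "\<forall>h\<in>X. \<phi> h \<subseteq> X \<and> countable (\<phi> h)"
  shows "club_ctbl X {M\<in>C. \<forall>h\<in>M. \<phi> h \<subseteq> M}" (is "club_ctbl X ?D")
  unfolding club_ctbl_def
proof (intro conjI allI impI ballI)
  show "?D \<subseteq> ctbl_subsets X" using club_ctbl_subset[OF C] by blast
next
  fix Y assume Y: "Y \<in> ctbl_subsets X"
  have "\<forall>M\<in>C. \<exists>M'. M' \<in> C \<and> M \<union> \<Union>(\<phi> ` M) \<subseteq> M'"
  proof
    fix M assume "M \<in> C"
    then have M: "M \<in> ctbl_subsets X" using club_ctbl_subset[OF C] by blast
    then have "M \<union> \<Union>(\<phi> ` M) \<in> ctbl_subsets X"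
      using \<phi> unfolding ctbl_subsets_def by auto
    then show "\<exists>M'. M' \<in> C \<and> M \<union> \<Union>(\<phi> ` M) \<subseteq> M'"
      using club_ctbl_unbounded[OF C] by blast
  qed
  from bchoice[OF this] obtain next_set where
    next_set: "\<forall>M\<in>C. next_set M \<in> C \<and> M \<union> \<Union>(\<phi> ` M) \<subseteq> next_set M"
    by blast
  obtain M0 where M0: "M0 \<in> C" "Y \<subseteq> M0" using club_ctbl_unbounded[OF C Y] by blast
  define M where "M n = (next_set ^^ n) M0" for n
  have MC: "M n \<in> C" for n
    by (induction n) (use M0 next_set in \<open>auto simp: M_def\<close>)
  have M_Suc: "M n \<union> \<Union>(\<phi> ` M n) \<subseteq> M (Suc n)" for n
    using next_set MC[of n] by (simp add: M_def)
  have "(\<Union>n. M n) \<in> C"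
    by (rule Union_increasing_in_club_ctbl[OF C MC]) (use M_Suc in blast)
  moreover have "\<phi> h \<subseteq> (\<Union>n. M n)" if "h \<in> (\<Union>n. M n)" for h
    using that M_Suc by blast
  moreover have "Y \<subseteq> M 0" using M0(2) by (simp add: M_def)
  then have "Y \<subseteq> (\<Union>n. M n)" by blast
  ultimately show "\<exists>M'\<in>?D. Y \<subseteq> M'" by blast
next
  fix ch assume "ch \<subseteq> ?D" "ch \<noteq> {}" "countable ch" "\<forall>u\<in>ch. \<forall>v\<in>ch. u \<subseteq> v \<or> v \<subseteq> u"
  then show "\<Union>ch \<in> ?D" using club_ctbl_Union[OF C, of ch] by blast
qed

text \<open>An \<open>\<omega>\<^sub>1\<close>-chain through a club, defined by transfinite recursion; the fixed infinite
  set Z keeps every stage infinite, as members of \<open>ctbl_subsets\<close> must be.\<close>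
lemma club_ctbl_w1_chain:
  assumes C: "club_ctbl X C" and X: "infinite X" and v: "v ` Field w1 \<subseteq> X"
  obtains N where "\<forall>\<alpha>\<in>Field w1. N \<alpha> \<in> C \<and> v \<alpha> \<in> N \<alpha> \<and> (\<forall>\<gamma>. w1_less \<gamma> \<alpha> \<longrightarrow> N \<gamma> \<subseteq> N \<alpha>)"
proof -
  obtain f :: "nat \<Rightarrow> _" where f: "inj f" "range f \<subseteq> X"
    using infinite_countable_subset[OF X] by blast
  define Z where "Z = range f"
  have Z: "Z \<subseteq> X" "countable Z" "infinite Z"
    using f finite_imageD unfolding Z_def by auto
  define H where "H F \<alpha> = (SOME M. M \<in> C \<and> insert (v \<alpha>) (Z \<union> \<Union>(F ` underS w1 \<alpha>)) \<subseteq> M)"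
    for F and \<alpha>
  have "wo_rel.adm_wo w1 H"
    unfolding wo_rel.adm_wo_def[OF w1_wo_rel]
  proof (intro allI impI)
    fix F G :: "nat set \<Rightarrow> 'a set" and \<alpha> assume "\<forall>\<gamma>\<in>underS w1 \<alpha>. F \<gamma> = G \<gamma>"
    then have "F ` underS w1 \<alpha> = G ` underS w1 \<alpha>" by (simp cong: image_cong)
    then show "H F \<alpha> = H G \<alpha>" unfolding H_def by simp
  qed
  define N where "N = wo_rel.worec w1 H"
  have N_fix: "N = H N"
    unfolding N_def by (rule wo_rel.worec_fixpoint[OF w1_wo_rel \<open>wo_rel.adm_wo w1 H\<close>])
  have stage: "\<alpha> \<in> Field w1 \<longrightarrow> N \<alpha> \<in> C \<and> insert (v \<alpha>) (Z \<union> \<Union>(N ` underS w1 \<alpha>)) \<subseteq> N \<alpha>" for \<alpha>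
  proof (induction \<alpha> rule: wo_rel.well_order_induct[OF w1_wo_rel])
    case (1 \<alpha>)
    show ?case
    proof
      assume \<alpha>: "\<alpha> \<in> Field w1"
      have below: "N \<gamma> \<in> ctbl_subsets X" if "\<gamma> \<in> underS w1 \<alpha>" for \<gamma>
      proof -
        have \<gamma>: "w1_less \<gamma> \<alpha>" using that unfolding underS_def by simp
        then have "\<gamma> \<in> Field w1" using w1_Field by blast
        then have "N \<gamma> \<in> C" using 1 \<gamma> by blast
        then show ?thesis using club_ctbl_subset[OF C] by blast
      qed
      have "countable (underS w1 \<alpha>)"
        using countable_w1_less[OF \<alpha>] unfolding underS_def by (simp add: conj_commute)
      then have "countable (\<Union>(N ` underS w1 \<alpha>))"
        using below unfolding ctbl_subsets_def by auto
      then have "insert (v \<alpha>) (Z \<union> \<Union>(N ` underS w1 \<alpha>)) \<in> ctbl_subsets X"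
        using Z below v \<alpha> unfolding ctbl_subsets_def by auto
      then have "\<exists>M. M \<in> C \<and> insert (v \<alpha>) (Z \<union> \<Union>(N ` underS w1 \<alpha>)) \<subseteq> M"
        using club_ctbl_unbounded[OF C] by blast
      then have "H N \<alpha> \<in> C \<and> insert (v \<alpha>) (Z \<union> \<Union>(N ` underS w1 \<alpha>)) \<subseteq> H N \<alpha>"
        unfolding H_def by (rule someI_ex)
      then show "N \<alpha> \<in> C \<and> insert (v \<alpha>) (Z \<union> \<Union>(N ` underS w1 \<alpha>)) \<subseteq> N \<alpha>"
        by (simp only: fun_cong[OF N_fix, of \<alpha>, symmetric])
    qed
  qed
  then have "\<forall>\<alpha>\<in>Field w1. N \<alpha> \<in> C \<and> v \<alpha> \<in> N \<alpha> \<and> (\<forall>\<gamma>. w1_less \<gamma> \<alpha> \<longrightarrow> N \<gamma> \<subseteq> N \<alpha>)"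
    unfolding underS_def by (simp add: conj_commute) blast
  then show thesis by (rule that)
qed

locale omega_tree =
  fixes T :: "'a set" and lt :: "'a \<Rightarrow> 'a \<Rightarrow> bool"
  assumes tree: "is_tree T lt" and height: "height_omega T lt"
begin

definition level :: "'a \<Rightarrow> nat" where
  "level t = card (preds T lt t)"

lemma irrefl: "t \<in> T \<Longrightarrow> \<not> lt t t"
  using tree unfolding is_tree_def by blast

lemma trans: "r \<in> T \<Longrightarrow> s \<in> T \<Longrightarrow> t \<in> T \<Longrightarrow> lt r s \<Longrightarrow> lt s t \<Longrightarrow> lt r t"
  using tree unfolding is_tree_def by blast

lemma preds_linear:
  "t \<in> T \<Longrightarrow> r \<in> T \<Longrightarrow> s \<in> T \<Longrightarrow> lt r t \<Longrightarrow> lt s t \<Longrightarrow> lt r s \<or> r = s \<or> lt s r"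
  using tree unfolding is_tree_def preds_def by blast

lemma finite_preds: "t \<in> T \<Longrightarrow> finite (preds T lt t)"
  using height unfolding height_omega_def by blast

lemma level_less:
  assumes "s \<in> T" "t \<in> T" "lt s t"
  shows "level s < level t"
proof -
  have "preds T lt s \<subset> preds T lt t"
    using assms trans irrefl unfolding preds_def by blast
  then show ?thesis unfolding level_def using finite_preds[OF assms(2)] by (simp add: psubset_card_mono)
qed

lemma countable_downward_closure:
  assumes "S \<subseteq> T" "countable S"
  shows "countable {t\<in>T. \<exists>s\<in>S. t = s \<or> lt t s}"
proof -
  have "{t\<in>T. \<exists>s\<in>S. t = s \<or> lt t s} \<subseteq> S \<union> (\<Union>s\<in>S. preds T lt s)"
    unfolding preds_def by blast
  moreover have "countable (\<Union>s\<in>S. preds T lt s)"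
    using assms(2) by (rule countable_UN) (use assms(1) finite_preds countable_finite in blast)
  ultimately show ?thesis using assms(2) by (meson countable_Un countable_subset)
qed

context
  fixes b assumes branch: "cofinal_branch T lt b"
begin

lemma branch_subset: "b \<subseteq> T"
  using branch unfolding cofinal_branch_def lin_chain_def by blast

lemma branch_linear: "x \<in> b \<Longrightarrow> y \<in> b \<Longrightarrow> lt x y \<or> x = y \<or> lt y x"
  using branch unfolding cofinal_branch_def lin_chain_def by blast

lemma branch_maximal: "lin_chain T lt c \<Longrightarrow> b \<subseteq> c \<Longrightarrow> c = b"
  using branch unfolding cofinal_branch_def by blast

lemma branch_level_obtains:
  obtains t where "t \<in> b" "level t = n"
  using branch unfolding cofinal_branch_def level_def by blast

lemma branch_downward_closed:
  assumes x: "x \<in> b" and y: "y \<in> T" "lt y x"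
  shows "y \<in> b"
proof -
  have xT: "x \<in> T" using x branch_subset by blast
  have "lt y z \<or> y = z \<or> lt z y" if z: "z \<in> b" for z
  proof -
    have zT: "z \<in> T" using z branch_subset by blast
    from branch_linear[OF z x] show ?thesis
      using preds_linear[OF xT y(1) zT y(2)] trans[OF y(1) xT zT y(2)] y(2) by blast
  qed
  then have "lin_chain T lt (insert y b)"
    using branch_subset branch_linear y(1) unfolding lin_chain_def by blast
  then show ?thesis using branch_maximal by blast
qed

lemma branch_lt_of_level_less:
  assumes "x \<in> b" "y \<in> b" "level x < level y"
  shows "lt x y"
proof -
  have "x \<in> T" "y \<in> T" using assms(1,2) branch_subset by auto
  then show ?thesis using branch_linear[OF assms(1,2)] level_less[of y x] assms(3) by auto
qed

lemma inj_on_level_branch: "inj_on level b"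
proof (rule inj_onI)
  fix x y assume "x \<in> b" "y \<in> b" "level x = level y"
  then show "x = y" using branch_linear level_less branch_subset by fastforce
qed

lemma countable_branch: "countable b"
  using inj_on_level_branch unfolding countable_def by blast

lemma infinite_branch: "infinite b"
proof
  assume "finite b"
  moreover have "n \<in> level ` b" for n
  proof -
    obtain t where "t \<in> b" "level t = n" by (rule branch_level_obtains)
    then show ?thesis by blast
  qed
  then have "level ` b = UNIV" by blast
  ultimately show False by (metis finite_imageI infinite_UNIV_nat)
qed

lemma branch_above_obtains:
  assumes "x \<in> b"
  obtains y where "y \<in> b" "lt x y"
  using branch_level_obtains[of "Suc (level x)"] branch_lt_of_level_less[OF assms] by (metis lessI)

lemma branch_infinite_subset_above:
  assumes "P \<subseteq> b" "infinite P" "x \<in> b"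
  obtains y where "y \<in> P" "lt x y"
proof -
  have "infinite (level ` P)"
    using assms(1,2) finite_imageD inj_on_subset[OF inj_on_level_branch] by blast
  then obtain y where "y \<in> P" "level x < level y"
    by (metis finite_nat_set_iff_bounded_le image_iff not_le_imp_less)
  then show thesis using that branch_lt_of_level_less assms(1,3) by blast
qed

lemma finite_proper_initial_segment:
  assumes "P \<subseteq> b" and down: "\<forall>x\<in>P. \<forall>y\<in>b. lt y x \<longrightarrow> y \<in> P" and "P \<noteq> b"
  shows "finite P"
proof (rule ccontr)
  assume "infinite P"
  obtain z where z: "z \<in> b" "z \<notin> P" using assms(1,3) by blast
  then obtain x where "x \<in> P" "lt z x"
    using branch_infinite_subset_above[OF assms(1) \<open>infinite P\<close>] by blast
  then show False using down z by blast
qed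

lemma branch_subset_downward_closure:
  assumes "infinite (b \<inter> S)"
  shows "b \<subseteq> {t\<in>T. \<exists>s\<in>S. t = s \<or> lt t s}"
  using branch_infinite_subset_above[of "b \<inter> S"] assms branch_subset by blast

end

lemma finite_Int_branches:
  assumes b: "cofinal_branch T lt b" and b': "cofinal_branch T lt b'" and "b \<noteq> b'"
  shows "finite (b \<inter> b')"
proof (rule finite_proper_initial_segment[OF b])
  show "b \<inter> b' \<subseteq> b" by blast
  show "\<forall>x\<in>b \<inter> b'. \<forall>y\<in>b. lt y x \<longrightarrow> y \<in> b \<inter> b'"
    using branch_downward_closed[OF b'] branch_subset[OF b] by blast
  have "lin_chain T lt b'" using b' unfolding cofinal_branch_def by blast
  then show "b \<inter> b' \<noteq> b" using branch_maximal[OF b] \<open>b \<noteq> b'\<close> by blast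
qed


lemma infinite_branch_Diff_downward_closed:
  assumes b: "cofinal_branch T lt b" and down: "\<forall>x\<in>D. \<forall>y\<in>T. lt y x \<longrightarrow> y \<in> D"
    and "\<not> b \<subseteq> D"
  shows "infinite (b - D)"
proof -
  have "\<forall>x\<in>b \<inter> D. \<forall>y\<in>b. lt y x \<longrightarrow> y \<in> b \<inter> D"
    using down branch_subset[OF b] by blast
  moreover have "b \<inter> D \<noteq> b" using \<open>\<not> b \<subseteq> D\<close> by blast
  ultimately have "finite (b \<inter> D)" using finite_proper_initial_segment[OF b Int_lower1] by blast
  then have "infinite (b - b \<inter> D)" using Diff_infinite_finite infinite_branch[OF b] by blast
  moreover have "b - b \<inter> D = b - D" by blast
  ultimately show ?thesis by simp
qed
end

definition separating_choice :: "('a set \<Rightarrow> 'a) \<Rightarrow> 'a set set \<Rightarrow> bool" where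
  "separating_choice f B \<longleftrightarrow>
     (\<forall>b\<in>B. f b \<in> b) \<and> (\<forall>b\<in>B. \<forall>b'\<in>B. b \<noteq> b' \<longrightarrow> f b \<notin> b' \<or> f b' \<notin> b)"

lemma nonstationary_over_iff: "nonstationary_over T lt B \<longleftrightarrow> (\<exists>f. separating_choice f B)"
  unfolding nonstationary_over_def separating_choice_def ..

lemma separating_choice_inj_on: "separating_choice f B \<Longrightarrow> inj_on f B"
  unfolding separating_choice_def inj_on_def by metis

locale branch_family = omega_tree T lt for T :: "'a set" and lt +
  fixes B :: "'a set set"
  assumes branches: "\<forall>b\<in>B. cofinal_branch T lt b"
begin

lemma branch: "b \<in> B \<Longrightarrow> cofinal_branch T lt b"
  using branches by blast

text \<open>Enumerate A and let each branch avoid the finitely many branches enumerated before it,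
  which it meets in finite sets only.\<close>
lemma countable_separating_choice_obtains:
  assumes A: "countable A" "A \<subseteq> B" and fresh: "\<forall>b\<in>A. infinite (b - D b)"
  obtains f where "\<forall>b\<in>A. f b \<in> b - D b" "\<forall>b\<in>A. \<forall>b'\<in>A. b \<noteq> b' \<longrightarrow> f b \<notin> b' \<or> f b' \<notin> b"
proof -
  have inj: "inj_on (to_nat_on A) A" using inj_on_to_nat_on[OF A(1)] .
  define earlier where "earlier b = {b'\<in>A. to_nat_on A b' < to_nat_on A b}" for b
  have "finite (earlier b)" for b
  proof -
    have "earlier b = to_nat_on A -` {..<to_nat_on A b} \<inter> A" unfolding earlier_def by auto
    then show ?thesis using finite_vimage_IntI[OF finite_lessThan inj] by simp
  qed
  have "\<forall>b\<in>A. \<exists>x. x \<in> b - D b \<and> (\<forall>b'\<in>earlier b. x \<notin> b')"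
  proof
    fix b assume b: "b \<in> A"
    have "finite (b \<inter> b')" if "b' \<in> earlier b" for b'
    proof -
      have "b' \<in> A" "b' \<noteq> b" using that unfolding earlier_def by auto
      then show ?thesis using finite_Int_branches[OF branch branch] b A(2) by blast
    qed
    then have "finite (\<Union>b'\<in>earlier b. b \<inter> b')" using \<open>finite (earlier b)\<close> by blast
    then have "infinite (b - D b - (\<Union>b'\<in>earlier b. b \<inter> b'))"
      using fresh b by (simp add: Diff_infinite_finite)
    then obtain x where "x \<in> b - D b - (\<Union>b'\<in>earlier b. b \<inter> b')"
      using infinite_imp_nonempty by blast
    then show "\<exists>x. x \<in> b - D b \<and> (\<forall>b'\<in>earlier b. x \<notin> b')" by blast
  qed
  from bchoice[OF this] obtain f where f: "\<forall>b\<in>A. f b \<in> b - D b \<and> (\<forall>b'\<in>earlier b. f b \<notin> b')"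
    by blast
  have sep: "f b \<notin> b' \<or> f b' \<notin> b" if b: "b \<in> A" "b' \<in> A" "b \<noteq> b'" for b b'
  proof -
    have "to_nat_on A b \<noteq> to_nat_on A b'" using b(3) inj_on_eq_iff[OF inj b(1,2)] by simp
    then have "to_nat_on A b < to_nat_on A b' \<or> to_nat_on A b' < to_nat_on A b" by linarith
    then have "b \<in> earlier b' \<or> b' \<in> earlier b" using b(1,2) unfolding earlier_def by blast
    then show ?thesis using f b(1,2) by blast
  qed
  show thesis by (rule that[of f]) (use f sep in blast)+
qed

text \<open>Across classes of the ranking, the branch of lower rank lies inside the set D of the
  other, so choices avoiding D separate branches of different ranks.\<close>
lemma nonstationary_by_ranking:
  fixes \<rho> :: "'a set \<Rightarrow> 'i" and D :: "'a set \<Rightarrow> 'a set"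
  assumes classes: "\<forall>i. countable {b\<in>B. \<rho> b = i}"
    and fresh: "\<forall>b\<in>B. infinite (b - D b)"
    and nested: "\<forall>b\<in>B. \<forall>b'\<in>B. \<rho> b \<noteq> \<rho> b' \<longrightarrow> b \<subseteq> D b' \<or> b' \<subseteq> D b"
  shows "nonstationary_over T lt B"
proof -
  have "\<forall>i. \<exists>g. (\<forall>b\<in>{b\<in>B. \<rho> b = i}. g b \<in> b - D b) \<and>
      (\<forall>b\<in>{b\<in>B. \<rho> b = i}. \<forall>b'\<in>{b\<in>B. \<rho> b = i}. b \<noteq> b' \<longrightarrow> g b \<notin> b' \<or> g b' \<notin> b)"
  proof
    fix i
    have "{b\<in>B. \<rho> b = i} \<subseteq> B" "\<forall>b\<in>{b\<in>B. \<rho> b = i}. infinite (b - D b)" using fresh by auto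
    then obtain g where "\<forall>b\<in>{b\<in>B. \<rho> b = i}. g b \<in> b - D b"
      "\<forall>b\<in>{b\<in>B. \<rho> b = i}. \<forall>b'\<in>{b\<in>B. \<rho> b = i}. b \<noteq> b' \<longrightarrow> g b \<notin> b' \<or> g b' \<notin> b"
      by (rule countable_separating_choice_obtains[OF classes[rule_format]])
    then show "\<exists>g. (\<forall>b\<in>{b\<in>B. \<rho> b = i}. g b \<in> b - D b) \<and>
      (\<forall>b\<in>{b\<in>B. \<rho> b = i}. \<forall>b'\<in>{b\<in>B. \<rho> b = i}. b \<noteq> b' \<longrightarrow> g b \<notin> b' \<or> g b' \<notin> b)"
      by blast
  qed
  from choice[OF this] obtain g where g: "\<forall>i. (\<forall>b\<in>{b\<in>B. \<rho> b = i}. g i b \<in> b - D b) \<and>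
      (\<forall>b\<in>{b\<in>B. \<rho> b = i}. \<forall>b'\<in>{b\<in>B. \<rho> b = i}. b \<noteq> b' \<longrightarrow> g i b \<notin> b' \<or> g i b' \<notin> b)"
    by blast
  define f where "f b = g (\<rho> b) b" for b
  have f: "f b \<in> b - D b" if "b \<in> B" for b using g that unfolding f_def by blast
  have "f b \<notin> b' \<or> f b' \<notin> b" if b: "b \<in> B" "b' \<in> B" "b \<noteq> b'" for b b'
  proof (cases "\<rho> b = \<rho> b'")
    case True
    then have "b \<in> {c\<in>B. \<rho> c = \<rho> b}" "b' \<in> {c\<in>B. \<rho> c = \<rho> b}" using b by auto
    then have "g (\<rho> b) b \<notin> b' \<or> g (\<rho> b) b' \<notin> b" using g b(3) by blast
    then show ?thesis unfolding f_def using True by simp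
  next
    case False
    then show ?thesis using nested f b by blast
  qed
  then have "separating_choice f B" unfolding separating_choice_def using f by blast
  then show ?thesis unfolding nonstationary_over_iff by blast
qed

text \<open>The rank of a branch is the first stage of the filtration containing it; by continuity
  the union D b of the earlier stages, a subtree, does not contain b.\<close>
lemma nonstationary_by_filtration:
  fixes I :: "nat set set" and U :: "nat set \<Rightarrow> 'a set"
  assumes I: "I \<subseteq> Field w1"
    and down: "\<forall>\<alpha>\<in>I. \<forall>x\<in>U \<alpha>. \<forall>y\<in>T. lt y x \<longrightarrow> y \<in> U \<alpha>"
    and covers: "\<forall>b\<in>B. \<exists>\<alpha>\<in>I. b \<subseteq> U \<alpha>"
    and small: "\<forall>\<alpha>\<in>I. countable {b\<in>B. b \<subseteq> U \<alpha>}"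
    and continuous: "\<forall>b\<in>B. \<forall>\<alpha>\<in>I. b \<subseteq> (\<Union>\<gamma>\<in>{\<gamma>\<in>I. w1_less \<gamma> \<alpha>}. U \<gamma>) \<longrightarrow>
       (\<exists>\<gamma>\<in>I. w1_less \<gamma> \<alpha> \<and> b \<subseteq> U \<gamma>)"
  shows "nonstationary_over T lt B"
proof -
  have "\<forall>b\<in>B. \<exists>\<alpha>. \<alpha> \<in> I \<and> b \<subseteq> U \<alpha> \<and> (\<forall>\<gamma>\<in>I. b \<subseteq> U \<gamma> \<longrightarrow> (\<alpha>, \<gamma>) \<in> w1)"
  proof
    fix b assume "b \<in> B"
    then obtain \<alpha> where "\<alpha> \<in> I" "b \<subseteq> U \<alpha>" using covers by blast
    then show "\<exists>\<alpha>. \<alpha> \<in> I \<and> b \<subseteq> U \<alpha> \<and> (\<forall>\<gamma>\<in>I. b \<subseteq> U \<gamma> \<longrightarrow> (\<alpha>, \<gamma>) \<in> w1)"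
      using w1_least[of "\<lambda>\<alpha>. \<alpha> \<in> I \<and> b \<subseteq> U \<alpha>" \<alpha>] I by blast
  qed
  from bchoice[OF this] obtain \<rho> where \<rho>:
    "\<forall>b\<in>B. \<rho> b \<in> I \<and> b \<subseteq> U (\<rho> b) \<and> (\<forall>\<gamma>\<in>I. b \<subseteq> U \<gamma> \<longrightarrow> (\<rho> b, \<gamma>) \<in> w1)"
    by blast
  define D where "D b = (\<Union>\<gamma>\<in>{\<gamma>\<in>I. w1_less \<gamma> (\<rho> b)}. U \<gamma>)" for b
  show ?thesis
  proof (rule nonstationary_by_ranking[of \<rho> D])
    show "\<forall>i. countable {b\<in>B. \<rho> b = i}"
    proof
      fix i
      show "countable {b\<in>B. \<rho> b = i}"
      proof (cases "i \<in> I")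
        case True
        have "{b\<in>B. \<rho> b = i} \<subseteq> {b\<in>B. b \<subseteq> U i}" using \<rho> by blast
        then show ?thesis using small True countable_subset by blast
      next
        case False
        then have "{b\<in>B. \<rho> b = i} = {}" using \<rho> by blast
        then show ?thesis by (simp only: countable_empty)
      qed
    qed
  next
    show "\<forall>b\<in>B. infinite (b - D b)"
    proof
      fix b assume b: "b \<in> B"
      have \<rho>b: "\<rho> b \<in> I" "b \<subseteq> U (\<rho> b)" "\<forall>\<gamma>\<in>I. b \<subseteq> U \<gamma> \<longrightarrow> (\<rho> b, \<gamma>) \<in> w1"
        using \<rho> b by auto
      have "\<forall>x\<in>D b. \<forall>y\<in>T. lt y x \<longrightarrow> y \<in> D b"
        using down unfolding D_def by blast
      moreover have "\<not> b \<subseteq> D b"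
      proof
        assume "b \<subseteq> D b"
        then obtain \<gamma> where \<gamma>: "\<gamma> \<in> I" "w1_less \<gamma> (\<rho> b)" "b \<subseteq> U \<gamma>"
          using continuous[rule_format, OF b \<rho>b(1)] unfolding D_def by blast
        then have "(\<rho> b, \<gamma>) \<in> w1" using \<rho>b(3) by blast
        then show False using \<gamma>(2) w1_antisym by blast
      qed
      ultimately show "infinite (b - D b)"
        using infinite_branch_Diff_downward_closed[OF branch[OF b]] by blast
    qed
  next
    show "\<forall>b\<in>B. \<forall>b'\<in>B. \<rho> b \<noteq> \<rho> b' \<longrightarrow> b \<subseteq> D b' \<or> b' \<subseteq> D b"
    proof (intro ballI impI)
      fix b b' assume b: "b \<in> B" "b' \<in> B" and "\<rho> b \<noteq> \<rho> b'"
      have I_b: "\<rho> b \<in> I" "\<rho> b' \<in> I" and U_b: "b \<subseteq> U (\<rho> b)" "b' \<subseteq> U (\<rho> b')"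
        using \<rho> b by auto
      have "(\<rho> b, \<rho> b') \<in> w1 \<or> (\<rho> b', \<rho> b) \<in> w1"
        using I_b I w1_total by blast
      then show "b \<subseteq> D b' \<or> b' \<subseteq> D b"
        using I_b U_b \<open>\<rho> b \<noteq> \<rho> b'\<close> unfolding D_def by blast
    qed
  qed
qed

lemma stationary_if_cantor_subtree:
  assumes "cantor_subtree T B S"
  shows "stationary_over T lt B"
  unfolding stationary_over_def nonstationary_over_iff
proof
  assume "\<exists>f. separating_choice f B"
  then obtain f where f: "separating_choice f B" ..
  let ?K = "closure_B B S" and ?D = "{t\<in>T. \<exists>s\<in>S. t = s \<or> lt t s}"
  have S: "S \<subseteq> T" "countable S" and "uncountable ?K"
    using assms unfolding cantor_subtree_def by auto
  have K: "?K \<subseteq> B" unfolding closure_B_def by blast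
  \<comment> \<open>A branch meeting S infinitely often lies below S, so f maps ?K injectively into ?D.\<close>
  have "f ` ?K \<subseteq> ?D"
  proof
    fix y assume "y \<in> f ` ?K"
    then obtain b where b: "b \<in> B" "infinite (b \<inter> S)" and y: "y = f b"
      unfolding closure_B_def by blast
    have "f b \<in> b" using f b(1) unfolding separating_choice_def by blast
    then show "y \<in> ?D" using branch_subset_downward_closure[OF branch[OF b(1)] b(2)] y by blast
  qed
  then have "countable (f ` ?K)" using countable_downward_closure[OF S] countable_subset by blast
  moreover have "inj_on f ?K" using inj_on_subset[OF separating_choice_inj_on[OF f] K] .
  ultimately have "countable ?K" by (rule countable_image_inj_on)
  then show False using \<open>uncountable ?K\<close> by blast
qed

text \<open>Taking each node f b to the code of b, every countable set closed under this map
  that contains the nodes of b also contains its code.\<close>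
lemma not_stationary_N_set_if_nonstationary:
  assumes node_inj: "inj_on node T" and ns: "nonstationary_over T lt B"
  shows "\<not> stationary_ctbl UNIV (N_set UNIV node code B)"
proof -
  obtain f where f: "separating_choice f B" using ns unfolding nonstationary_over_iff ..
  have f_mem: "f b \<in> b" if "b \<in> B" for b
    using f that unfolding separating_choice_def by blast
  have "f ` B \<subseteq> T" using f_mem branch_subset[OF branch] by blast
  then have "inj_on (node \<circ> f) B"
    using comp_inj_on[OF separating_choice_inj_on[OF f] inj_on_subset[OF node_inj]] by blast
  define \<phi> where "\<phi> h = code ` {b\<in>B. node (f b) = h}" for h
  have "countable (\<phi> h)" for h
  proof -
    have "{b\<in>B. node (f b) = h} = (node \<circ> f) -` {h} \<inter> B" by auto
    then have "finite {b\<in>B. node (f b) = h}"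
      using finite_vimage_IntI[OF _ \<open>inj_on (node \<circ> f) B\<close>] by simp
    then show ?thesis unfolding \<phi>_def by (simp add: countable_finite)
  qed
  then have "\<forall>h\<in>UNIV. \<phi> h \<subseteq> UNIV \<and> countable (\<phi> h)" by blast
  then have club: "club_ctbl UNIV {M\<in>ctbl_subsets UNIV. \<forall>h\<in>M. \<phi> h \<subseteq> M}"
    by (rule club_ctbl_closure_points[OF club_ctbl_ctbl_subsets])
  have "code b \<in> M" if M: "\<forall>h\<in>M. \<phi> h \<subseteq> M" and b: "b \<in> B" "node ` b \<subseteq> M" for M b
  proof -
    have "node (f b) \<in> M" using f_mem[OF b(1)] b(2) by blast
    moreover have "code b \<in> \<phi> (node (f b))" unfolding \<phi>_def using b(1) by blast
    ultimately show ?thesis using M by blast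
  qed
  then have "{M\<in>ctbl_subsets UNIV. \<forall>h\<in>M. \<phi> h \<subseteq> M} \<inter> N_set UNIV node code B = {}"
    unfolding N_set_def by blast
  with club show ?thesis unfolding stationary_ctbl_def by blast
qed


text \<open>Close the sets of a club avoiding N_set under passing from the code of a branch to its
  nodes and from a node to its predecessors.\<close>
lemma closed_club_avoiding_N_set_obtains:
  fixes node :: "'a \<Rightarrow> 'h" and code :: "'a set \<Rightarrow> 'h"
  assumes node_inj: "inj_on node T" and code_inj: "inj_on code B"
    and C: "club_ctbl UNIV C" and CN: "C \<inter> N_set UNIV node code B = {}"
  obtains C' where "club_ctbl UNIV C'" "\<forall>M\<in>C'. \<forall>b\<in>B. code b \<in> M \<longleftrightarrow> node ` b \<subseteq> M"
    "\<forall>M\<in>C'. \<forall>x\<in>T. node x \<in> M \<longrightarrow> (\<forall>y\<in>T. lt y x \<longrightarrow> node y \<in> M)"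
proof -
  define \<phi> where "\<phi> h = node ` (\<Union>{b\<in>B. code b = h} \<union> {y\<in>T. \<exists>x\<in>T. node x = h \<and> lt y x})"
    for h
  have "\<forall>h\<in>UNIV. \<phi> h \<subseteq> UNIV \<and> countable (\<phi> h)"
  proof
    fix h
    have "{b\<in>B. code b = h} = code -` {h} \<inter> B" by auto
    then have "finite {b\<in>B. code b = h}" using finite_vimage_IntI[OF _ code_inj] by simp
    then have "countable (\<Union>b\<in>{b\<in>B. code b = h}. b)"
      by (rule countable_UN[OF countable_finite]) (use countable_branch[OF branch] in blast)
    then have codes: "countable (\<Union>{b\<in>B. code b = h})" by simp
    have "{x\<in>T. node x = h} = node -` {h} \<inter> T" by auto
    then have "finite {x\<in>T. node x = h}" using finite_vimage_IntI[OF _ node_inj] by simp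
    then have fin: "finite (\<Union>x\<in>{x\<in>T. node x = h}. preds T lt x)"
      by (rule finite_UN_I) (simp add: finite_preds)
    have "{y\<in>T. \<exists>x\<in>T. node x = h \<and> lt y x} \<subseteq> (\<Union>x\<in>{x\<in>T. node x = h}. preds T lt x)"
      unfolding preds_def by blast
    then have "countable {y\<in>T. \<exists>x\<in>T. node x = h \<and> lt y x}"
      using countable_subset[OF _ countable_finite[OF fin]] by blast
    with codes show "\<phi> h \<subseteq> UNIV \<and> countable (\<phi> h)" unfolding \<phi>_def by simp
  qed
  then have club: "club_ctbl UNIV {M\<in>C. \<forall>h\<in>M. \<phi> h \<subseteq> M}" by (rule club_ctbl_closure_points[OF C])
  have "code b \<in> M \<longleftrightarrow> node ` b \<subseteq> M" if M: "M \<in> C" "\<forall>h\<in>M. \<phi> h \<subseteq> M" and b: "b \<in> B" for M b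
  proof
    assume "code b \<in> M"
    moreover have "node ` b \<subseteq> \<phi> (code b)" unfolding \<phi>_def using b by blast
    ultimately show "node ` b \<subseteq> M" using M(2) by blast
  next
    assume "node ` b \<subseteq> M"
    moreover have "M \<in> ctbl_subsets UNIV" using M(1) club_ctbl_subset[OF C] by blast
    ultimately show "code b \<in> M" using CN M(1) b unfolding N_set_def by blast
  qed
  moreover have "node y \<in> M" if "\<forall>h\<in>M. \<phi> h \<subseteq> M" "x \<in> T" "node x \<in> M" "y \<in> T" "lt y x" for M x y
    using that unfolding \<phi>_def by blast
  ultimately show thesis using that[OF club] by blast
qed

lemma countable_branches_in_club_set:
  assumes code_inj: "inj_on code B" and C: "club_ctbl X C"
    and code_iff: "\<forall>M\<in>C. \<forall>b\<in>B. code b \<in> M \<longleftrightarrow> node ` b \<subseteq> M" and M: "M \<in> C"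
  shows "countable {b\<in>B. b \<subseteq> {x\<in>T. node x \<in> M}}"
proof -
  have "code ` {b\<in>B. code b \<in> M} \<subseteq> M" by blast
  moreover have "countable M" using M club_ctbl_subset[OF C] unfolding ctbl_subsets_def by blast
  ultimately have "countable (code ` {b\<in>B. code b \<in> M})" by (rule countable_subset)
  moreover have "inj_on code {b\<in>B. code b \<in> M}" by (rule inj_on_subset[OF code_inj]) blast
  ultimately have "countable {b\<in>B. code b \<in> M}" by (rule countable_image_inj_on)
  moreover have "{b\<in>B. b \<subseteq> {x\<in>T. node x \<in> M}} \<subseteq> {b\<in>B. code b \<in> M}"
  proof
    fix b assume "b \<in> {b\<in>B. b \<subseteq> {x\<in>T. node x \<in> M}}"
    then have b: "b \<in> B" and "node ` b \<subseteq> M" by auto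
    then have "code b \<in> M" using code_iff[rule_format, OF M b] by blast
    with b show "b \<in> {b\<in>B. code b \<in> M}" by blast
  qed
  ultimately show ?thesis by (rule countable_subset[rotated])
qed

text \<open>The stages containing the single nodes of b form a countable chain in C, whose union
  then contains the code of b; so one of these stages does.\<close>
lemma branch_in_earlier_chain_stage:
  assumes C: "club_ctbl X C" and code_iff: "\<forall>M\<in>C. \<forall>b\<in>B. code b \<in> M \<longleftrightarrow> node ` b \<subseteq> M"
    and M: "\<forall>\<alpha>\<in>Field w1. M \<alpha> \<in> C \<and> (\<forall>\<gamma>. w1_less \<gamma> \<alpha> \<longrightarrow> M \<gamma> \<subseteq> M \<alpha>)"
    and b: "b \<in> B" and covered: "b \<subseteq> (\<Union>\<gamma>\<in>{\<gamma>\<in>Field w1. w1_less \<gamma> \<alpha>}. {x\<in>T. node x \<in> M \<gamma>})"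
  shows "\<exists>\<gamma>\<in>Field w1. w1_less \<gamma> \<alpha> \<and> b \<subseteq> {x\<in>T. node x \<in> M \<gamma>}"
proof -
  have M_mono: "M \<gamma> \<subseteq> M \<delta>" if "(\<gamma>, \<delta>) \<in> w1" for \<gamma> \<delta>
  proof (cases "\<gamma> = \<delta>")
    case False
    have "\<delta> \<in> Field w1" using that w1_Field by blast
    then show ?thesis using M that False by blast
  qed simp
  have "\<forall>x\<in>b. \<exists>\<gamma>. \<gamma> \<in> Field w1 \<and> w1_less \<gamma> \<alpha> \<and> node x \<in> M \<gamma>" using covered by blast
  from bchoice[OF this] obtain g where g: "\<forall>x\<in>b. g x \<in> Field w1 \<and> w1_less (g x) \<alpha> \<and> node x \<in> M (g x)"
    by blast
  let ?ch = "(\<lambda>x. M (g x)) ` b"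
  have M_g: "M (g x) \<in> C" if "x \<in> b" for x using g M that by blast
  have ch: "\<Union>?ch \<in> C"
  proof (rule club_ctbl_Union[OF C])
    show "?ch \<subseteq> C" using M_g by blast
    show "?ch \<noteq> {}" using infinite_imp_nonempty[OF infinite_branch[OF branch[OF b]]] by blast
    show "countable ?ch" using countable_branch[OF branch[OF b]] by simp
    show "\<forall>u\<in>?ch. \<forall>v\<in>?ch. u \<subseteq> v \<or> v \<subseteq> u" using g w1_total M_mono by blast
  qed
  have "node ` b \<subseteq> \<Union>?ch" using g by blast
  then have "code b \<in> \<Union>?ch" using code_iff[rule_format, OF ch b] by blast
  then obtain z where z: "z \<in> b" "code b \<in> M (g z)" by blast
  then have "node ` b \<subseteq> M (g z)" using code_iff[rule_format, OF M_g[OF z(1)] b] by blast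
  then have "b \<subseteq> {x\<in>T. node x \<in> M (g z)}" using branch_subset[OF branch[OF b]] by blast
  then show ?thesis using g z(1) by blast
qed
end

locale aleph1_branch_family = branch_family T lt B for T :: "'a set" and lt and B +
  assumes size: "ordIso2 (card_of T) w1"
begin

lemma bij_betw_w1_obtains:
  obtains e where "bij_betw e (Field w1) T"
proof -
  have "ordIso2 (card_of (Field w1)) w1" using card_of_Field_ordIso[OF w1_Card_order] .
  then have "ordIso2 (card_of (Field w1)) (card_of T)"
    using ordIso_symmetric[OF size] ordIso_transitive by blast
  then show thesis using that card_of_ordIso by blast
qed

lemma uncountable_T: "uncountable T"
proof
  assume "countable T"
  obtain e where "bij_betw e (Field w1) T" by (rule bij_betw_w1_obtains)
  then have "countable (Field w1)"
    using \<open>countable T\<close> countable_image_inj_on unfolding bij_betw_def by blast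
  then show False using uncountable_Field_w1 by blast
qed

context
  fixes e :: "nat set \<Rightarrow> 'a" assumes e: "bij_betw e (Field w1) T"
begin

abbreviation rank :: "'a \<Rightarrow> nat set" where
  "rank \<equiv> inv_into (Field w1) e"

lemma rank_Field: "x \<in> T \<Longrightarrow> rank x \<in> Field w1"
  using bij_betwE[OF bij_betw_inv_into[OF e]] by blast

lemma e_rank: "x \<in> T \<Longrightarrow> e (rank x) = x"
  using bij_betw_inv_into_right[OF e] .

lemma inj_on_rank: "inj_on rank T"
  using bij_betw_inv_into[OF e] unfolding bij_betw_def by blast

lemma rank_bounded:
  assumes "countable A" "A \<subseteq> T"
  obtains u where "u \<in> Field w1" "\<forall>x\<in>A. w1_less (rank x) u"
proof -
  have "countable (rank ` A)" "rank ` A \<subseteq> Field w1" using assms rank_Field by auto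
  then obtain u where "u \<in> Field w1" "\<forall>y\<in>rank ` A. w1_less y u" by (rule w1_countable_bounded)
  then show thesis using that by blast
qed

lemma rank_bound_obtains:
  assumes "\<forall>\<beta>\<in>Field w1. countable (A \<beta>) \<and> A \<beta> \<subseteq> T"
  obtains h where "\<forall>\<beta>\<in>Field w1. h \<beta> \<in> Field w1 \<and> (\<forall>y\<in>A \<beta>. w1_less (rank y) (h \<beta>))"
proof -
  have "\<forall>\<beta>\<in>Field w1. \<exists>u. u \<in> Field w1 \<and> (\<forall>y\<in>A \<beta>. w1_less (rank y) u)"
  proof
    fix \<beta> assume "\<beta> \<in> Field w1"
    then have "countable (A \<beta>)" "A \<beta> \<subseteq> T" using assms by auto
    then obtain u where "u \<in> Field w1" "\<forall>y\<in>A \<beta>. w1_less (rank y) u" by (rule rank_bounded)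
    then show "\<exists>u. u \<in> Field w1 \<and> (\<forall>y\<in>A \<beta>. w1_less (rank y) u)" by blast
  qed
  from bchoice[OF this] obtain h where "\<forall>\<beta>\<in>Field w1. h \<beta> \<in> Field w1 \<and> (\<forall>y\<in>A \<beta>. w1_less (rank y) (h \<beta>))"
    by blast
  then show thesis by (rule that)
qed

lemma countable_preds_e: "\<beta> \<in> Field w1 \<Longrightarrow> countable (preds T lt (e \<beta>)) \<and> preds T lt (e \<beta>) \<subseteq> T"
  using finite_preds bij_betwE[OF e] countable_finite unfolding preds_def by blast

text \<open>The node f b has rank at most s. If it is below s, the whole branch b is bounded by
  its h-value below s; if it equals s, the same happens for a node of b above f b.\<close>
lemma separating_choice_sup_not_closure_point:
  assumes f: "separating_choice f B"
    and h: "\<forall>\<beta>\<in>Field w1. h \<beta> \<in> Field w1 \<and>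
      (\<forall>y\<in>preds T lt (e \<beta>) \<union> \<Union>{b\<in>B. f b = e \<beta>}. w1_less (rank y) (h \<beta>))"
    and s_closed: "\<forall>\<beta>. w1_less \<beta> s \<longrightarrow> w1_less (h \<beta>) s"
  shows "s \<notin> E_set e B"
proof
  assume "s \<in> E_set e B"
  then obtain b where b: "b \<in> B" and sup: "w1_sup (rank ` b) s" unfolding E_set_def by blast
  have f_mem: "f b \<in> b" using f b unfolding separating_choice_def by blast
  have bT: "b \<subseteq> T" using branch_subset[OF branch[OF b]] .
  define \<beta> where "\<beta> = rank (f b)"
  have fbT: "f b \<in> T" using f_mem bT by blast
  have \<beta>F: "\<beta> \<in> Field w1" and e\<beta>: "e \<beta> = f b"
    using rank_Field[OF fbT] e_rank[OF fbT] unfolding \<beta>_def by auto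
  have \<beta>s: "(\<beta>, s) \<in> w1" unfolding \<beta>_def using w1_sup_upper[OF sup] f_mem by blast
  show False
  proof (cases "\<beta> = s")
    case False
    have "b \<in> {b'\<in>B. f b' = e \<beta>}" using b e\<beta> by simp
    then have "\<forall>x\<in>rank ` b. (x, h \<beta>) \<in> w1" using h \<beta>F by blast
    moreover have "h \<beta> \<in> Field w1" using h \<beta>F by blast
    ultimately have "(s, h \<beta>) \<in> w1" using w1_sup_least[OF sup] by blast
    moreover have "w1_less (h \<beta>) s" using s_closed \<beta>s False by blast
    ultimately show False using w1_antisym by blast
  next
    case True
    obtain y where y: "y \<in> b" "lt (f b) y" using branch_above_obtains[OF branch[OF b] f_mem] .
    have yT: "y \<in> T" using y(1) bT by blast
    have "rank y \<noteq> s" using e_rank[OF yT] e\<beta> True y(2) irrefl[OF fbT] by auto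
    moreover have "(rank y, s) \<in> w1" using w1_sup_upper[OF sup] y(1) by blast
    ultimately have "w1_less (h (rank y)) s" using s_closed by blast
    moreover have "f b \<in> preds T lt (e (rank y))" unfolding preds_def using e_rank[OF yT] fbT y(2) by simp
    then have "w1_less s (h (rank y))" using h rank_Field[OF yT] True unfolding \<beta>_def by blast
    ultimately show False using w1_antisym by blast
  qed
qed

lemma stationary_if_E_set_stationary:
  assumes "w1_stationary (E_set e B)"
  shows "stationary_over T lt B"
  unfolding stationary_over_def nonstationary_over_iff
proof
  assume "\<exists>f. separating_choice f B"
  then obtain f where f: "separating_choice f B" ..
  have "\<forall>\<beta>\<in>Field w1. countable (preds T lt (e \<beta>) \<union> \<Union>{b\<in>B. f b = e \<beta>}) \<and>
      preds T lt (e \<beta>) \<union> \<Union>{b\<in>B. f b = e \<beta>} \<subseteq> T"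
  proof
    fix \<beta> assume \<beta>: "\<beta> \<in> Field w1"
    have "finite {b\<in>B. f b = e \<beta>}"
      using finite_vimage_IntI[OF _ separating_choice_inj_on[OF f], of "{e \<beta>}"]
      by (simp add: Int_def conj_commute)
    then have "countable (\<Union>b\<in>{b\<in>B. f b = e \<beta>}. b)"
      by (rule countable_UN[OF countable_finite]) (use countable_branch[OF branch] in blast)
    then have "countable (\<Union>{b\<in>B. f b = e \<beta>})" by simp
    moreover have "\<Union>{b\<in>B. f b = e \<beta>} \<subseteq> T" using branch_subset[OF branch] by blast
    ultimately show "countable (preds T lt (e \<beta>) \<union> \<Union>{b\<in>B. f b = e \<beta>}) \<and>
        preds T lt (e \<beta>) \<union> \<Union>{b\<in>B. f b = e \<beta>} \<subseteq> T"
      using countable_preds_e[OF \<beta>] by simp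
  qed
  then obtain h where h: "\<forall>\<beta>\<in>Field w1. h \<beta> \<in> Field w1 \<and>
      (\<forall>y\<in>preds T lt (e \<beta>) \<union> \<Union>{b\<in>B. f b = e \<beta>}. w1_less (rank y) (h \<beta>))"
    by (rule rank_bound_obtains)
  let ?H = "{\<gamma>\<in>Field w1. \<forall>\<beta>. w1_less \<beta> \<gamma> \<longrightarrow> w1_less (h \<beta>) \<gamma>}"
  have "w1_club ?H" by (rule w1_club_closure_points) (use h in blast)
  moreover have "s \<notin> E_set e B" if "s \<in> ?H" for s
    using separating_choice_sup_not_closure_point[OF f h] that by blast
  ultimately show False using assms unfolding w1_stationary_def by blast
qed

lemma countable_branches_below_rank:
  assumes no_cantor: "\<not> (\<exists>S. cantor_subtree T B S)" and \<delta>: "\<delta> \<in> Field w1"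
  shows "countable {b\<in>B. b \<subseteq> {x\<in>T. w1_less (rank x) \<delta>}}"
proof -
  let ?U = "{x\<in>T. w1_less (rank x) \<delta>}"
  have "rank ` ?U \<subseteq> {\<beta>. w1_less \<beta> \<delta>}" by blast
  then have "countable (rank ` ?U)" by (rule countable_subset[OF _ countable_w1_less[OF \<delta>]])
  moreover have "inj_on rank ?U" by (rule inj_on_subset[OF inj_on_rank]) blast
  ultimately have "countable ?U" by (rule countable_image_inj_on)
  moreover have "?U \<subseteq> T" by blast
  ultimately have "countable (closure_B B ?U)"
    using no_cantor unfolding cantor_subtree_def by blast
  moreover have "{b\<in>B. b \<subseteq> ?U} \<subseteq> closure_B B ?U"
  proof
    fix b assume "b \<in> {b\<in>B. b \<subseteq> ?U}"
    then have "b \<in> B" "b \<inter> ?U = b" by auto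
    then show "b \<in> closure_B B ?U"
      unfolding closure_B_def using infinite_branch[OF branch] by simp
  qed
  ultimately show ?thesis by (rule countable_subset[rotated])
qed

text \<open>Otherwise the stages below \<open>\<alpha>\<close> that do not contain b would have the same supremum
  as the ranks of b, which would then lie in C.\<close>
lemma branch_below_earlier_segment:
  assumes C: "w1_club C" and CE: "C \<inter> E_set e B = {}" and b: "b \<in> B"
    and covered: "b \<subseteq> (\<Union>\<gamma>\<in>{\<gamma>\<in>C. w1_less \<gamma> \<alpha>}. {x\<in>T. w1_less (rank x) \<gamma>})"
  shows "\<exists>\<gamma>\<in>C. w1_less \<gamma> \<alpha> \<and> b \<subseteq> {x\<in>T. w1_less (rank x) \<gamma>}"
proof (rule ccontr)
  assume none: "\<not> (\<exists>\<gamma>\<in>C. w1_less \<gamma> \<alpha> \<and> b \<subseteq> {x\<in>T. w1_less (rank x) \<gamma>})"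
  let ?A = "{\<gamma>\<in>C. w1_less \<gamma> \<alpha>}"
  have bT: "b \<subseteq> T" using branch_subset[OF branch[OF b]] .
  have "countable (rank ` b)" "rank ` b \<subseteq> Field w1"
    using countable_branch[OF branch[OF b]] rank_Field bT by auto
  then obtain s where sup: "w1_sup (rank ` b) s" by (rule w1_sup_exists)
  have "w1_sup ?A s"
  proof (rule w1_sup_cofinal[OF sup])
    show "\<forall>x\<in>rank ` b. \<exists>\<gamma>\<in>?A. (x, \<gamma>) \<in> w1"
    proof
      fix x assume "x \<in> rank ` b"
      then obtain y where "y \<in> b" "x = rank y" by blast
      then obtain \<gamma> where "\<gamma> \<in> ?A" "w1_less x \<gamma>" using covered by blast
      then show "\<exists>\<gamma>\<in>?A. (x, \<gamma>) \<in> w1" by blast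
    qed
    show "\<forall>\<gamma>\<in>?A. \<exists>x\<in>rank ` b. (\<gamma>, x) \<in> w1"
    proof
      fix \<gamma> assume \<gamma>: "\<gamma> \<in> ?A"
      then obtain x where x: "x \<in> b" "\<not> w1_less (rank x) \<gamma>" using none bT by blast
      have "\<gamma> \<in> Field w1" using \<gamma> w1_club_subset[OF C] by blast
      then have "(\<gamma>, rank x) \<in> w1" using w1_not_le_iff_less[OF _ rank_Field] x bT by blast
      then show "\<exists>x\<in>rank ` b. (\<gamma>, x) \<in> w1" using x(1) by blast
    qed
  qed
  moreover have "?A \<noteq> {}"
  proof -
    obtain x where "x \<in> b" using infinite_imp_nonempty[OF infinite_branch[OF branch[OF b]]] by blast
    then show ?thesis using covered by blast
  qed
  moreover have "?A \<subseteq> C" by blast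
  ultimately have "s \<in> C" using w1_club_closed[OF C] by blast
  moreover have "s \<in> E_set e B" unfolding E_set_def using w1_sup_Field[OF sup] b sup by blast
  ultimately show False using CE by blast
qed

text \<open>Filtration by the initial segments of the enumeration e at the points of a club
  avoiding E_set that are closed under the rank bound of predecessors, so that these
  segments are subtrees.\<close>
lemma nonstationary_if_E_set_nonstationary:
  assumes no_cantor: "\<not> (\<exists>S. cantor_subtree T B S)" and E: "\<not> w1_stationary (E_set e B)"
  shows "nonstationary_over T lt B"
proof -
  have "E_set e B \<subseteq> Field w1" unfolding E_set_def by blast
  then obtain C where C: "w1_club C" and CE: "C \<inter> E_set e B = {}"
    using E unfolding w1_stationary_def by blast
  have "\<forall>\<beta>\<in>Field w1. countable (preds T lt (e \<beta>)) \<and> preds T lt (e \<beta>) \<subseteq> T"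
    using countable_preds_e by blast
  then obtain h where h: "\<forall>\<beta>\<in>Field w1. h \<beta> \<in> Field w1 \<and>
      (\<forall>y\<in>preds T lt (e \<beta>). w1_less (rank y) (h \<beta>))"
    by (rule rank_bound_obtains)
  define C' where "C' = C \<inter> {\<gamma>\<in>Field w1. \<forall>\<beta>. w1_less \<beta> \<gamma> \<longrightarrow> w1_less (h \<beta>) \<gamma>}"
  have C': "w1_club C'" unfolding C'_def using w1_club_Int[OF C w1_club_closure_points] h by blast
  have C'F: "C' \<subseteq> Field w1" using w1_club_subset[OF C'] .
  define U where "U \<delta> = {x\<in>T. w1_less (rank x) \<delta>}" for \<delta>
  show ?thesis
  proof (rule nonstationary_by_filtration[OF C'F])
    show "\<forall>\<delta>\<in>C'. \<forall>x\<in>U \<delta>. \<forall>y\<in>T. lt y x \<longrightarrow> y \<in> U \<delta>"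
    proof (intro ballI impI)
      fix \<delta> x y assume \<delta>: "\<delta> \<in> C'" and x: "x \<in> U \<delta>" and y: "y \<in> T" "lt y x"
      have xT: "x \<in> T" and x\<delta>: "w1_less (rank x) \<delta>" using x unfolding U_def by auto
      have "y \<in> preds T lt (e (rank x))" using e_rank[OF xT] y unfolding preds_def by simp
      then have "w1_less (rank y) (h (rank x))" using h rank_Field[OF xT] by blast
      moreover have "w1_less (h (rank x)) \<delta>" using \<delta> x\<delta> unfolding C'_def by blast
      ultimately have "w1_less (rank y) \<delta>" using w1_less_le_trans by blast
      then show "y \<in> U \<delta>" using y(1) unfolding U_def by blast
    qed
  next
    show "\<forall>b\<in>B. \<exists>\<delta>\<in>C'. b \<subseteq> U \<delta>"
    proof
      fix b assume b: "b \<in> B"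
      obtain u where u: "u \<in> Field w1" "\<forall>x\<in>b. w1_less (rank x) u"
        using rank_bounded[OF countable_branch branch_subset] branch[OF b] by metis
      obtain \<delta> where "\<delta> \<in> C'" "w1_less u \<delta>" using w1_club_unbounded[OF C' u(1)] by blast
      then have "b \<subseteq> U \<delta>"
        using u(2) branch_subset[OF branch[OF b]] w1_less_le_trans unfolding U_def by blast
      then show "\<exists>\<delta>\<in>C'. b \<subseteq> U \<delta>" using \<open>\<delta> \<in> C'\<close> by blast
    qed
  next
    show "\<forall>\<delta>\<in>C'. countable {b\<in>B. b \<subseteq> U \<delta>}"
      using countable_branches_below_rank[OF no_cantor] C'F unfolding U_def by blast
  next
    have "C' \<inter> E_set e B = {}" using CE unfolding C'_def by blast
    then show "\<forall>b\<in>B. \<forall>\<alpha>\<in>C'. b \<subseteq> (\<Union>\<gamma>\<in>{\<gamma>\<in>C'. w1_less \<gamma> \<alpha>}. U \<gamma>) \<longrightarrow>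
      (\<exists>\<gamma>\<in>C'. w1_less \<gamma> \<alpha> \<and> b \<subseteq> U \<gamma>)"
      using branch_below_earlier_segment[OF C'] unfolding U_def by blast
  qed
qed

end

text \<open>Filtration by an \<open>\<omega>\<^sub>1\<close>-chain through the closed club of the previous lemma.\<close>
lemma nonstationary_if_N_set_nonstationary:
  fixes node :: "'a \<Rightarrow> 'h" and code :: "'a set \<Rightarrow> 'h"
  assumes node_inj: "inj_on node T" and code_inj: "inj_on code B"
    and N: "\<not> stationary_ctbl UNIV (N_set UNIV node code B)"
  shows "nonstationary_over T lt B"
proof -
  have "N_set UNIV node code B \<subseteq> ctbl_subsets UNIV" unfolding N_set_def by blast
  then obtain C where C: "club_ctbl UNIV C" and CN: "C \<inter> N_set UNIV node code B = {}"
    using N unfolding stationary_ctbl_def by blast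
  obtain C' where C': "club_ctbl UNIV C'" and code_iff: "\<forall>M\<in>C'. \<forall>b\<in>B. code b \<in> M \<longleftrightarrow> node ` b \<subseteq> M"
    and down: "\<forall>M\<in>C'. \<forall>x\<in>T. node x \<in> M \<longrightarrow> (\<forall>y\<in>T. lt y x \<longrightarrow> node y \<in> M)"
    using closed_club_avoiding_N_set_obtains[OF node_inj code_inj C CN] by blast
  obtain e where e: "bij_betw e (Field w1) T" by (rule bij_betw_w1_obtains)
  have "infinite T" using uncountable_T countable_finite by blast
  then have "infinite (node ` T)" using finite_imageD node_inj by meson
  then have "infinite (UNIV :: 'h set)" by (rule infinite_super[OF subset_UNIV])
  then obtain M where M: "\<forall>\<alpha>\<in>Field w1. M \<alpha> \<in> C' \<and> node (e \<alpha>) \<in> M \<alpha> \<and>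
      (\<forall>\<gamma>. w1_less \<gamma> \<alpha> \<longrightarrow> M \<gamma> \<subseteq> M \<alpha>)"
    using club_ctbl_w1_chain[where v = "\<lambda>\<alpha>. node (e \<alpha>)", OF C' _ subset_UNIV] by blast
  then have chain: "\<forall>\<alpha>\<in>Field w1. M \<alpha> \<in> C' \<and> (\<forall>\<gamma>. w1_less \<gamma> \<alpha> \<longrightarrow> M \<gamma> \<subseteq> M \<alpha>)" by blast
  define U where "U \<alpha> = {x\<in>T. node x \<in> M \<alpha>}" for \<alpha>
  show ?thesis
  proof (rule nonstationary_by_filtration[of "Field w1" U])
    show "\<forall>\<alpha>\<in>Field w1. \<forall>x\<in>U \<alpha>. \<forall>y\<in>T. lt y x \<longrightarrow> y \<in> U \<alpha>"
      using down M unfolding U_def by blast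
  next
    show "\<forall>b\<in>B. \<exists>\<alpha>\<in>Field w1. b \<subseteq> U \<alpha>"
    proof
      fix b assume b: "b \<in> B"
      have bT: "b \<subseteq> T" using branch_subset[OF branch[OF b]] .
      obtain u where u: "u \<in> Field w1" "\<forall>x\<in>b. w1_less (inv_into (Field w1) e x) u"
        using rank_bounded[OF e countable_branch[OF branch[OF b]] bT] by blast
      have "x \<in> U u" if x: "x \<in> b" for x
      proof -
        have xT: "x \<in> T" using x bT by blast
        let ?\<beta> = "inv_into (Field w1) e x"
        have "node (e ?\<beta>) \<in> M ?\<beta>" using M rank_Field[OF e xT] by blast
        then have "node x \<in> M ?\<beta>" using e_rank[OF e xT] by simp
        moreover have "M ?\<beta> \<subseteq> M u" using M u x by blast
        ultimately show ?thesis using xT unfolding U_def by blast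
      qed
      then show "\<exists>\<alpha>\<in>Field w1. b \<subseteq> U \<alpha>" using u(1) by blast
    qed
  next
    show "\<forall>\<alpha>\<in>Field w1. countable {b\<in>B. b \<subseteq> U \<alpha>}"
      using countable_branches_in_club_set[OF code_inj C' code_iff] M unfolding U_def by blast
  next
    show "\<forall>b\<in>B. \<forall>\<alpha>\<in>Field w1. b \<subseteq> (\<Union>\<gamma>\<in>{\<gamma>\<in>Field w1. w1_less \<gamma> \<alpha>}. U \<gamma>) \<longrightarrow>
      (\<exists>\<gamma>\<in>Field w1. w1_less \<gamma> \<alpha> \<and> b \<subseteq> U \<gamma>)"
      using branch_in_earlier_chain_stage[OF C' code_iff chain] unfolding U_def by blast
  qed simp
qed

end

theorem lemma4:
  fixes T :: "'a set" and lt :: "'a \<Rightarrow> 'a \<Rightarrow> bool" and B :: "'a set set"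
    and node :: "'a \<Rightarrow> 'h" and code :: "'a set \<Rightarrow> 'h"
  assumes tree: "is_tree T lt"
    and height: "height_omega T lt"
    and size: "ordIso2 (card_of T) (cardSuc natLeq)"
    and branches: "\<forall>b\<in>B. cofinal_branch T lt b"
    and node_inj: "inj_on node T"
    and code_inj: "inj_on code B"
    and disj: "node ` T \<inter> code ` B = {}"
  shows "(stationary_over T lt B \<longleftrightarrow>
            ((\<exists>S. cantor_subtree T B S) \<or>
             (\<forall>e. bij_betw e (Field (cardSuc natLeq)) T \<longrightarrow> w1_stationary (E_set e B))))
       \<and> (stationary_over T lt B \<longleftrightarrow> stationary_ctbl UNIV (N_set UNIV node code B))"
proof -
  interpret aleph1_branch_family T lt B
    using tree height branches size by unfold_locales
  have "stationary_over T lt B \<longleftrightarrow>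
      (\<exists>S. cantor_subtree T B S) \<or> (\<forall>e. bij_betw e (Field w1) T \<longrightarrow> w1_stationary (E_set e B))"
  proof
    assume "stationary_over T lt B"
    then show "(\<exists>S. cantor_subtree T B S) \<or> (\<forall>e. bij_betw e (Field w1) T \<longrightarrow> w1_stationary (E_set e B))"
      using nonstationary_if_E_set_nonstationary unfolding stationary_over_def by blast
  next
    obtain e where e: "bij_betw e (Field w1) T" by (rule bij_betw_w1_obtains)
    assume "(\<exists>S. cantor_subtree T B S) \<or> (\<forall>e. bij_betw e (Field w1) T \<longrightarrow> w1_stationary (E_set e B))"
    then show "stationary_over T lt B"
      using stationary_if_cantor_subtree stationary_if_E_set_stationary[OF e] e by blast
  qed
  moreover have "stationary_over T lt B \<longleftrightarrow> stationary_ctbl UNIV (N_set UNIV node code B)"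
    using nonstationary_if_N_set_nonstationary[OF node_inj code_inj]
      not_stationary_N_set_if_nonstationary[OF node_inj]
    unfolding stationary_over_def by blast
  ultimately show ?thesis by blast
qed

end
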